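(* Let $0<s_1<s_2<1$, $2s_1<d<\frac{2s_1s_2}{s_2-s_1}$, and suppose $g$ satisfies $(G_1)$–$(G_3)$. Then the function $m:(0,\infty)\to\mathbb{R}$, $m(a)=m_a$, is continuous.
   Context: For $s\in(0,1)$, $|\nabla_s u|_2^2=\int_{\mathbb{R}^d\times\mathbb{R}^d}\frac{|u(x)-u(y)|^2}{|x-y|^{d+2s}}dx\,dy$; $|\cdot|_p$ is the $L^p(\mathbb{R}^d)$ norm; $H^{s_1,s_2}(\mathbb{R}^d)=\{u\in L^2(\mathbb{R}^d):|\nabla_{s_1}u|_2<\infty,\ |\nabla_{s_2}u|_2<\infty\}$. $S_a=\{u\in H^{s_1,s_2}(\mathbb{R}^d):|u|_2^2=a\}$. $g:\mathbb{R}\to\mathbb{R}$, $G(s)=\int_0^sg$, $\widetilde G(s)=\frac12g(s)s-G(s)$. $(G_1)$: $g$ continuous, odd. $(G_2)$: there exist $\alpha,\beta$ with $2+\frac{4s_2}{d}<\alpha<\beta<\frac{2d}{d-2s_1}$ and $\alpha G(s)\le g(s)s\le\beta G(s)$ for all $s$. $(G_3)$: $\widetilde G'$ exists and $\widetilde G'(s)s\ge\alpha\widetilde G(s)$ for all $s$. $I(u)=\frac12|\nabla_{s_1}u|_2^2+\frac12|\nabla_{s_2}u|_2^2-\int_{\mathbb{R}^d}G(u)dx$; $P_\infty(u)=s_1|\nabla_{s_1}u|_2^2+s_2|\nabla_{s_2}u|_2^2-d\int_{\mathbb{R}^d}\widetilde G(u)dx$; $\mathcal{P}_{\infty,a}=\{u\in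 S_a:P_\infty(u)=0\}$; $m_a=\inf_{u\in\mathcal{P}_{\infty,a}}I(u)$. *)

theory Defs
  imports "HOL-Analysis.Analysis"
begin

definition gag_sq :: "real \<Rightarrow> ('a::euclidean_space \<Rightarrow> real) \<Rightarrow> ennreal" where
  "gag_sq s u = (\<integral>\<^sup>+ p. ennreal ((u (fst p) - u (snd p))\<^sup>2
        / norm (fst p - snd p) powr (real DIM('a) + 2 * s)) \<partial>(lborel \<Otimes>\<^sub>M lborel))"

definition L2_sq :: "('a::euclidean_space \<Rightarrow> real) \<Rightarrow> ennreal" where
  "L2_sq u = (\<integral>\<^sup>+ x. ennreal ((u x)\<^sup>2) \<partial>lborel)"

definition Hs1s2 :: "real \<Rightarrow> real \<Rightarrow> ('a::euclidean_space \<Rightarrow> real) set" where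
  "Hs1s2 s1 s2 = {u. u \<in> borel_measurable lborel \<and> L2_sq u < \<infinity>
                     \<and> gag_sq s1 u < \<infinity> \<and> gag_sq s2 u < \<infinity>}"

definition Sa :: "real \<Rightarrow> real \<Rightarrow> real \<Rightarrow> ('a::euclidean_space \<Rightarrow> real) set" where
  "Sa s1 s2 a = {u \<in> Hs1s2 s1 s2. L2_sq u = ennreal a}"

text \<open>Primitive G(s) = \<integral>_0^s g (oriented interval integral).\<close>
definition Gprim :: "(real \<Rightarrow> real) \<Rightarrow> real \<Rightarrow> real" where
  "Gprim g s = (LBINT t=0..s. g t)"

definition Gtil :: "(real \<Rightarrow> real) \<Rightarrow> real \<Rightarrow> real" where
  "Gtil g s = g s * s / 2 - Gprim g s"

definition Ifun :: "real \<Rightarrow> real \<Rightarrow> (real \<Rightarrow> real) \<Rightarrow> ('a::euclidean_space \<Rightarrow> real) \<Rightarrow> real" where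
  "Ifun s1 s2 g u = enn2real (gag_sq s1 u) / 2 + enn2real (gag_sq s2 u) / 2
                    - (\<integral>x. Gprim g (u x) \<partial>lborel)"

definition Pinf :: "real \<Rightarrow> real \<Rightarrow> (real \<Rightarrow> real) \<Rightarrow> ('a::euclidean_space \<Rightarrow> real) \<Rightarrow> real" where
  "Pinf s1 s2 g u = s1 * enn2real (gag_sq s1 u) + s2 * enn2real (gag_sq s2 u)
                    - real DIM('a) * (\<integral>x. Gtil g (u x) \<partial>lborel)"

definition Pmfd :: "real \<Rightarrow> real \<Rightarrow> (real \<Rightarrow> real) \<Rightarrow> real \<Rightarrow> ('a::euclidean_space \<Rightarrow> real) set" where
  "Pmfd s1 s2 g a = {u \<in> Sa s1 s2 a. Pinf s1 s2 g u = 0}"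

text \<open>m_a = inf of I over the Pohozaev manifold; the type 'a fixes the dimension d.\<close>
definition m_level :: "'a::euclidean_space itself \<Rightarrow> real \<Rightarrow> real \<Rightarrow> (real \<Rightarrow> real) \<Rightarrow> real \<Rightarrow> real" where
  "m_level _ s1 s2 g a = Inf (Ifun s1 s2 g ` (Pmfd s1 s2 g a :: ('a \<Rightarrow> real) set))"

end

theory Submission
  imports Defs "HOL-Real_Asymp.Real_Asymp"
begin

(* For u on the Pohozaev manifold P_a and \<mu> > 0, the functions \<mu> t^(d/2) u(t x) lie on S_(\<mu>^2 a),
   and for a suitable t on P_(\<mu>^2 a): mass supercriticality \<alpha> > 2 + 4 s2/d makes the nonlinear
   part of the Pohozaev functional negligible for small t and dominant for large t.  By (G_3),
   u maximises I along its fibre t \<mapsto> t^(d/2) u(t x), and by (G_2) the potential energy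
   scales at least like min(\<mu>^2, \<mu>^\<beta>).  Together with the coercivity of I on the Pohozaev
   manifold this gives m_b \<le> (b/a) m_a for a \<le> b and m_b (1 - \<epsilon>(b/a)) \<le> m_a for b \<le> a, where
   \<epsilon>(r) \<rightarrow> 0 as r \<rightarrow> 1; these bounds squeeze m_b to m_a as b \<rightarrow> a. *)

section \<open>Elementary real analysis\<close>

lemma DERIV_nonneg_imp_nondecreasing_pos:
  fixes f f' :: "real \<Rightarrow> real"
  assumes "\<And>x. 0 < x \<Longrightarrow> (f has_real_derivative f' x) (at x)"
    and "\<And>x. a \<le> x \<Longrightarrow> x \<le> b \<Longrightarrow> 0 \<le> f' x" and "0 < a" "a \<le> b"
  shows "f a \<le> f b"
  using assms by (intro DERIV_nonneg_imp_nondecreasing[OF \<open>a \<le> b\<close>]) (metis less_le_trans)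

lemma DERIV_sign_change_imp_min_at_1:
  fixes f f' :: "real \<Rightarrow> real"
  assumes deriv: "\<And>x. 0 < x \<Longrightarrow> (f has_real_derivative f' x) (at x)"
    and right: "\<And>x. 1 \<le> x \<Longrightarrow> 0 \<le> f' x"
    and left: "\<And>x. 0 < x \<Longrightarrow> x \<le> 1 \<Longrightarrow> f' x \<le> 0"
    and "0 < t"
  shows "f 1 \<le> f t"
proof (cases "1 \<le> t")
  case True
  show ?thesis
    by (rule DERIV_nonneg_imp_nondecreasing_pos[where f'=f', OF deriv right _ True]) simp_all
next
  case False
  have "- f t \<le> - f 1"
  proof (rule DERIV_nonneg_imp_nondecreasing_pos[where f="\<lambda>x. - f x" and f'="\<lambda>x. - f' x"])
    show "((\<lambda>x. - f x) has_real_derivative - f' x) (at x)" if "0 < x" for x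
      using deriv[OF that] by (rule DERIV_minus)
    show "0 \<le> - f' x" if "t \<le> x" "x \<le> 1" for x
      using left[of x] that \<open>0 < t\<close> by simp
  qed (use False \<open>0 < t\<close> in simp_all)
  then show ?thesis by simp
qed

lemma powr_minus_one_divide_mono:
  fixes t e1 e2 :: real
  assumes "0 < t" "0 < e1" "e1 \<le> e2"
  shows "(t powr e1 - 1) / e1 \<le> (t powr e2 - 1) / e2"
proof (rule DERIV_nonneg_imp_nondecreasing_pos[where f="\<lambda>e. (t powr e - 1) / e"])
  fix x :: real assume "0 < x"
  show "((\<lambda>e. (t powr e - 1) / e) has_real_derivative
      (t powr x * ln t * x - (t powr x - 1)) / x\<^sup>2) (at x)"
    using \<open>0 < t\<close> \<open>0 < x\<close>
    by (auto intro!: derivative_eq_intros simp: power2_eq_square)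
next
  fix x :: real
  define y where "y = x * ln t"
  have tx: "t powr x = exp y" using \<open>0 < t\<close> by (simp add: powr_def y_def mult.commute)
  \<comment> \<open>the numerator is \<open>y e\<^sup>y - e\<^sup>y + 1 \<ge> 0\<close>, i.e. \<open>1 - y \<le> e\<^sup>-\<^sup>y\<close>\<close>
  have "(1 - y) * exp y \<le> exp (- y) * exp y"
    using exp_ge_add_one_self[of "- y"] by (intro mult_right_mono) auto
  then have "0 \<le> t powr x * ln t * x - (t powr x - 1)"
    unfolding tx by (simp add: y_def exp_minus algebra_simps)
  then show "0 \<le> (t powr x * ln t * x - (t powr x - 1)) / x\<^sup>2" by simp
qed (use assms in auto)

lemma weighted_powr_sum_ge_at_le_1:
  fixes s1 s2 A1 A2 t :: real
  assumes "0 < s1" "s1 \<le> s2" "0 \<le> A1" "0 < t" "t \<le> 1"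
  shows "t powr (2 * s2) * (s1 * A1 + s2 * A2) \<le> s1 * t powr (2 * s1) * A1 + s2 * t powr (2 * s2) * A2"
proof -
  have "t powr (2 * s2) \<le> t powr (2 * s1)" using assms by (intro powr_mono') auto
  then have "s1 * A1 * t powr (2 * s2) \<le> s1 * A1 * t powr (2 * s1)"
    using assms by (intro mult_left_mono) auto
  then show ?thesis by (simp add: algebra_simps)
qed

lemma weighted_powr_sum_le_at_ge_1:
  fixes s1 s2 A1 A2 t :: real
  assumes "0 < s1" "s1 \<le> s2" "0 \<le> A1" "1 \<le> t"
  shows "s1 * t powr (2 * s1) * A1 + s2 * t powr (2 * s2) * A2 \<le> t powr (2 * s2) * (s1 * A1 + s2 * A2)"
proof -
  have "t powr (2 * s1) \<le> t powr (2 * s2)" using assms by (intro powr_mono) auto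
  then have "s1 * A1 * t powr (2 * s1) \<le> s1 * A1 * t powr (2 * s2)"
    using assms by (intro mult_left_mono) auto
  then show ?thesis by (simp add: algebra_simps)
qed

text \<open>The Pohozaev constraint along a fibre: \<open>A1\<close>, \<open>A2\<close> stand for the squared seminorms
  of \<open>u\<close> and \<open>\<Psi> l\<close> for \<open>\<integral>x. Gtil g (l * u x) \<partial>lborel\<close>.  The exponent
  \<open>D \<alpha> / 2 - D - 2 s2\<close> is positive exactly in the mass-supercritical range.\<close>

context
  fixes D s1 s2 \<alpha> A1 A2 \<mu> :: real and \<Psi> :: "real \<Rightarrow> real"
  assumes D_pos: "0 < D" and s1_pos: "0 < s1" and s1_le_s2: "s1 \<le> s2"
    and A_nonneg: "0 \<le> A1" "0 \<le> A2" and \<mu>_pos: "0 < \<mu>"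
    and K_eq: "D * \<Psi> 1 = s1 * A1 + s2 * A2"
    and \<Psi>_ge: "\<And>l. 1 \<le> l \<Longrightarrow> l powr \<alpha> * \<Psi> 1 \<le> \<Psi> l"
    and \<Psi>_le: "\<And>l. 0 < l \<Longrightarrow> l \<le> 1 \<Longrightarrow> \<Psi> l \<le> l powr \<alpha> * \<Psi> 1"
begin

lemma fibre_powr_identity:
  assumes "0 < t"
  shows "D * (t powr - D * ((\<mu> * t powr (D / 2)) powr \<alpha> * \<Psi> 1))
    = \<mu> powr \<alpha> * t powr (D * \<alpha> / 2 - D - 2 * s2) * (t powr (2 * s2) * (s1 * A1 + s2 * A2))"
proof -
  have "(\<mu> * t powr (D / 2)) powr \<alpha> = \<mu> powr \<alpha> * t powr (D * \<alpha> / 2)"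
    using assms \<mu>_pos by (simp add: powr_mult powr_powr)
  moreover have "t powr - D * t powr (D * \<alpha> / 2) = t powr (D * \<alpha> / 2 - D - 2 * s2) * t powr (2 * s2)"
    by (simp add: powr_add[symmetric])
  ultimately show ?thesis
    using K_eq[symmetric] by (simp add: mult_ac)
qed

lemma fibre_balance_le_at_small:
  assumes "0 < t" "t \<le> 1" "\<mu> * t powr (D / 2) \<le> 1"
    and "\<mu> powr \<alpha> * t powr (D * \<alpha> / 2 - D - 2 * s2) \<le> \<mu>\<^sup>2"
  shows "D * (t powr - D * \<Psi> (\<mu> * t powr (D / 2)))
    \<le> \<mu>\<^sup>2 * (s1 * t powr (2 * s1) * A1 + s2 * t powr (2 * s2) * A2)"
proof -
  have "D * (t powr - D * \<Psi> (\<mu> * t powr (D / 2)))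
      \<le> D * (t powr - D * ((\<mu> * t powr (D / 2)) powr \<alpha> * \<Psi> 1))"
    using \<Psi>_le[of "\<mu> * t powr (D / 2)"] assms D_pos \<mu>_pos by (intro mult_left_mono) auto
  also have "\<dots> \<le> \<mu>\<^sup>2 * (t powr (2 * s2) * (s1 * A1 + s2 * A2))"
    unfolding fibre_powr_identity[OF \<open>0 < t\<close>] using assms s1_pos s1_le_s2 A_nonneg
    by (intro mult_right_mono) auto
  also have "\<dots> \<le> \<mu>\<^sup>2 * (s1 * t powr (2 * s1) * A1 + s2 * t powr (2 * s2) * A2)"
    using weighted_powr_sum_ge_at_le_1[OF s1_pos s1_le_s2 A_nonneg(1) assms(1,2)]
    by (intro mult_left_mono) auto
  finally show ?thesis .
qed

lemma fibre_balance_ge_at_large: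
  assumes "1 \<le> t" "1 \<le> \<mu> * t powr (D / 2)"
    and "\<mu>\<^sup>2 \<le> \<mu> powr \<alpha> * t powr (D * \<alpha> / 2 - D - 2 * s2)"
  shows "\<mu>\<^sup>2 * (s1 * t powr (2 * s1) * A1 + s2 * t powr (2 * s2) * A2)
    \<le> D * (t powr - D * \<Psi> (\<mu> * t powr (D / 2)))"
proof -
  have "0 < t" using assms by simp
  have "\<mu>\<^sup>2 * (s1 * t powr (2 * s1) * A1 + s2 * t powr (2 * s2) * A2)
      \<le> \<mu>\<^sup>2 * (t powr (2 * s2) * (s1 * A1 + s2 * A2))"
    using weighted_powr_sum_le_at_ge_1[OF s1_pos s1_le_s2 A_nonneg(1) assms(1)]
    by (intro mult_left_mono) auto
  also have "\<dots> \<le> D * (t powr - D * ((\<mu> * t powr (D / 2)) powr \<alpha> * \<Psi> 1))"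
    unfolding fibre_powr_identity[OF \<open>0 < t\<close>] using assms s1_pos s1_le_s2 A_nonneg
    by (intro mult_right_mono) auto
  also have "\<dots> \<le> D * (t powr - D * \<Psi> (\<mu> * t powr (D / 2)))"
    using \<Psi>_ge[OF assms(2)] D_pos by (intro mult_left_mono) auto
  finally show ?thesis .
qed

lemma exists_fibre_balance_root:
  assumes "2 + 4 * s2 / D < \<alpha>" "continuous_on {0<..} \<Psi>"
  shows "\<exists>t>0. D * (t powr - D * \<Psi> (\<mu> * t powr (D / 2)))
    = \<mu>\<^sup>2 * (s1 * t powr (2 * s1) * A1 + s2 * t powr (2 * s2) * A2)"
proof -
  define \<gamma> where "\<gamma> = D * \<alpha> / 2 - D - 2 * s2"
  have "4 * s2 < (\<alpha> - 2) * D"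
    using assms(1) D_pos by (simp add: field_simps)
  then have "0 < \<gamma>" by (simp add: \<gamma>_def algebra_simps)
  have "\<forall>\<^sub>F t in at_right 0. 0 < t \<and> t \<le> 1 \<and> \<mu> * t powr (D / 2) \<le> 1 \<and> \<mu> powr \<alpha> * t powr \<gamma> \<le> \<mu>\<^sup>2"
    using D_pos \<mu>_pos \<open>0 < \<gamma>\<close> by (intro eventually_conj; real_asymp)
  then obtain a where a: "0 < a" "a \<le> 1" "\<mu> * a powr (D / 2) \<le> 1" "\<mu> powr \<alpha> * a powr \<gamma> \<le> \<mu>\<^sup>2"
    using eventually_happens[of _ "at_right (0::real)"] by force
  have "\<forall>\<^sub>F t in at_top. 1 \<le> t \<and> 1 \<le> \<mu> * t powr (D / 2) \<and> \<mu>\<^sup>2 \<le> \<mu> powr \<alpha> * t powr \<gamma>"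
    using D_pos \<mu>_pos \<open>0 < \<gamma>\<close> by (intro eventually_conj; real_asymp)
  then obtain b where b: "1 \<le> b" "1 \<le> \<mu> * b powr (D / 2)" "\<mu>\<^sup>2 \<le> \<mu> powr \<alpha> * b powr \<gamma>"
    using eventually_happens[of _ "at_top :: real filter"] by force
  define f where "f t = D * (t powr - D * \<Psi> (\<mu> * t powr (D / 2)))
    - \<mu>\<^sup>2 * (s1 * t powr (2 * s1) * A1 + s2 * t powr (2 * s2) * A2)" for t
  have "continuous_on {a..b} f"
  proof -
    have "continuous_on {a..b} (\<lambda>t. \<Psi> (\<mu> * t powr (D / 2)))"
      using \<open>0 < a\<close> \<mu>_pos
      by (intro continuous_on_compose2[OF assms(2)] continuous_intros) auto
    then show ?thesis
      unfolding f_def using \<open>0 < a\<close> by (intro continuous_intros) auto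
  qed
  moreover have "f a \<le> 0" "0 \<le> f b"
    using fibre_balance_le_at_small[OF a[unfolded \<gamma>_def]]
      fibre_balance_ge_at_large[OF b[unfolded \<gamma>_def]] by (simp_all add: f_def)
  ultimately obtain t where "a \<le> t" "f t = 0"
    using IVT'[of f a 0 b] a(2) b(1) by auto
  then show ?thesis using \<open>0 < a\<close> by (intro exI[of _ t]) (simp add: f_def)
qed

end

context
  fixes m \<phi> :: "real \<Rightarrow> real"
  assumes nonneg: "\<And>a. 0 < a \<Longrightarrow> 0 \<le> m a"
    and up: "\<And>a b. 0 < a \<Longrightarrow> a \<le> b \<Longrightarrow> m b \<le> b / a * m a"
    and down: "\<And>a b. 0 < b \<Longrightarrow> b \<le> a \<Longrightarrow> m b * \<phi> (b / a) \<le> m a"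
begin

lemma sandwich_lower_of_scaling_bounds:
  assumes "0 < a" "0 < b"
  shows "m a * min (b / a) (\<phi> (a / b)) \<le> m b"
proof (cases "a \<le> b")
  case True
  then have "m a * \<phi> (a / b) \<le> m b" using down[of a b] assms by (simp add: mult.commute)
  then show ?thesis using nonneg[OF \<open>0 < a\<close>] by (smt (verit) min.cobounded2 mult_left_mono)
next
  case False
  then have "b / a * m a \<le> m b"
    using up[of b a] assms by (simp add: field_simps)
  then show ?thesis using nonneg[OF \<open>0 < a\<close>] by (smt (verit) min.cobounded1 mult.commute mult_left_mono)
qed

lemma sandwich_upper_of_scaling_bounds:
  assumes "0 < a" "0 < b" "0 < \<phi> (b / a)"
  shows "m b \<le> max (b / a * m a) (m a / \<phi> (b / a))"
proof (cases "a \<le> b")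
  case True
  then show ?thesis using up[OF \<open>0 < a\<close>] by (simp add: le_max_iff_disj)
next
  case False
  then have "m b \<le> m a / \<phi> (b / a)"
    using down[of b a] assms by (simp add: pos_le_divide_eq)
  then show ?thesis by (simp add: le_max_iff_disj)
qed

lemma continuous_on_pos_if_scaling_bounds:
  assumes \<phi>: "isCont \<phi> 1" "\<phi> 1 = 1"
  shows "continuous_on {0<..} m"
proof (intro continuous_at_imp_continuous_on ballI)
  fix a :: real assume "a \<in> {0<..}"
  then have "0 < a" by simp
  have ratio_lim: "((\<lambda>b. b / a) \<longlongrightarrow> 1) (at a)" "((\<lambda>b. a / b) \<longlongrightarrow> 1) (at a)"
    using \<open>0 < a\<close> by (auto intro!: tendsto_eq_intros)
  then have \<phi>_lim: "((\<lambda>b. \<phi> (b / a)) \<longlongrightarrow> 1) (at a)" "((\<lambda>b. \<phi> (a / b)) \<longlongrightarrow> 1) (at a)"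
    using isCont_tendsto_compose[OF \<phi>(1)] \<phi>(2) by fastforce+
  have pos: "\<forall>\<^sub>F b in at a. 0 < b \<and> 0 < \<phi> (b / a)"
    using order_tendstoD(1)[OF tendsto_ident_at \<open>0 < a\<close>] order_tendstoD(1)[OF \<phi>_lim(1), of 0]
    by (auto intro: eventually_conj)
  show "isCont m a" unfolding isCont_def
  proof (rule tendsto_sandwich[where f="\<lambda>b. m a * min (b / a) (\<phi> (a / b))"
        and h="\<lambda>b. max (b / a * m a) (m a / \<phi> (b / a))"])
    show "\<forall>\<^sub>F b in at a. m a * min (b / a) (\<phi> (a / b)) \<le> m b"
      using pos by eventually_elim (use \<open>0 < a\<close> sandwich_lower_of_scaling_bounds in auto)
    show "\<forall>\<^sub>F b in at a. m b \<le> max (b / a * m a) (m a / \<phi> (b / a))"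
      using pos by eventually_elim (use \<open>0 < a\<close> sandwich_upper_of_scaling_bounds in auto)
    show "((\<lambda>b. m a * min (b / a) (\<phi> (a / b))) \<longlongrightarrow> m a) (at a)"
      using tendsto_mult[OF tendsto_const tendsto_min[OF ratio_lim(1) \<phi>_lim(2)], of "m a"] by simp
    show "((\<lambda>b. max (b / a * m a) (m a / \<phi> (b / a))) \<longlongrightarrow> m a) (at a)"
      using \<open>0 < a\<close> by (auto intro!: tendsto_eq_intros \<phi>_lim(1))
  qed
qed

end

section \<open>Lebesgue integrals and dilations on Euclidean space\<close>

lemma integrable_nonneg_le_cmult:
  fixes f h :: "'a \<Rightarrow> real"
  assumes "integrable M f" "h \<in> borel_measurable M" "\<And>x. 0 \<le> h x" "\<And>x. h x \<le> c * f x"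
  shows "integrable M h"
proof (rule Bochner_Integration.integrable_bound[OF integrable_mult_right[OF assms(1)] assms(2)])
  show "AE x in M. norm (h x) \<le> norm (c * f x)"
    using assms(3,4) by (intro AE_I2) (smt (verit) real_norm_def)
qed

text \<open>No integrability is assumed: a non-integrable function has Bochner integral \<open>0\<close>.\<close>

lemma cmult_integral_le_integral:
  fixes f h :: "'a \<Rightarrow> real"
  assumes "integrable M f \<longleftrightarrow> integrable M h" "\<And>x. c * f x \<le> h x"
  shows "c * (\<integral>x. f x \<partial>M) \<le> (\<integral>x. h x \<partial>M)"
proof (cases "integrable M f")
  case True
  then have "(\<integral>x. c * f x \<partial>M) \<le> (\<integral>x. h x \<partial>M)"
    using assms by (intro integral_mono) auto
  then show ?thesis by simp
next
  case False
  then show ?thesis using assms(1) by (simp add: not_integrable_integral_eq)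
qed

lemma integral_le_cmult_integral:
  fixes f h :: "'a \<Rightarrow> real"
  assumes "integrable M f \<longleftrightarrow> integrable M h" "\<And>x. h x \<le> c * f x"
  shows "(\<integral>x. h x \<partial>M) \<le> c * (\<integral>x. f x \<partial>M)"
proof (cases "integrable M f")
  case True
  then have "(\<integral>x. h x \<partial>M) \<le> (\<integral>x. c * f x \<partial>M)"
    using assms by (intro integral_mono) auto
  then show ?thesis by simp
next
  case False
  then show ?thesis using assms(1) by (simp add: not_integrable_integral_eq)
qed

lemma nn_integral_lborel_scaleR:
  fixes f :: "'a::euclidean_space \<Rightarrow> ennreal" and c :: real
  assumes [measurable]: "f \<in> borel_measurable borel" and "c \<noteq> 0"
  shows "(\<integral>\<^sup>+x. f (c *\<^sub>R x) \<partial>lborel) = ennreal (1 / \<bar>c\<bar> ^ DIM('a)) * (\<integral>\<^sup>+x. f x \<partial>lborel)"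
proof -
  have "(\<integral>\<^sup>+x. f x \<partial>lborel) = ennreal (\<bar>c\<bar> ^ DIM('a)) * (\<integral>\<^sup>+x. f (c *\<^sub>R x) \<partial>lborel)"
    by (subst lborel_affine[OF \<open>c \<noteq> 0\<close>, of 0])
      (simp add: nn_integral_density nn_integral_distr nn_integral_cmult)
  moreover have "ennreal (1 / \<bar>c\<bar> ^ DIM('a)) * ennreal (\<bar>c\<bar> ^ DIM('a)) = 1"
    using \<open>c \<noteq> 0\<close> by (simp add: ennreal_mult[symmetric])
  ultimately show ?thesis by (simp add: mult.assoc[symmetric])
qed

lemma integrable_lborel_scaleR_iff:
  fixes f :: "'a::euclidean_space \<Rightarrow> real" and c :: real
  assumes "c \<noteq> 0"
  shows "integrable lborel (\<lambda>x. f (c *\<^sub>R x)) \<longleftrightarrow> integrable lborel f"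
proof -
  have *: "integrable lborel (\<lambda>x. h (c *\<^sub>R x))"
    if "integrable lborel h" "c \<noteq> 0" for h :: "'a \<Rightarrow> real" and c :: real
  proof -
    have [measurable]: "h \<in> borel_measurable borel" using that by simp
    have "(\<integral>\<^sup>+x. ennreal (norm (h (c *\<^sub>R x))) \<partial>lborel)
        = ennreal (1 / \<bar>c\<bar> ^ DIM('a)) * (\<integral>\<^sup>+x. ennreal (norm (h x)) \<partial>lborel)"
      using that by (intro nn_integral_lborel_scaleR[where f="\<lambda>x. ennreal (norm (h x))"]) auto
    also have "\<dots> < \<infinity>"
      using that unfolding integrable_iff_bounded by (simp add: ennreal_mult_less_top)
    finally show ?thesis using that unfolding integrable_iff_bounded by simp
  qed
  show ?thesis
    using *[of f c] *[of "\<lambda>x. f (c *\<^sub>R x)" "1 / c"] assms by auto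
qed

lemma integral_lborel_scaleR:
  fixes f :: "'a::euclidean_space \<Rightarrow> real" and c :: real
  assumes "c \<noteq> 0"
  shows "(\<integral>x. f (c *\<^sub>R x) \<partial>lborel) = (\<integral>x. f x \<partial>lborel) / \<bar>c\<bar> ^ DIM('a)"
proof (cases "integrable lborel f")
  case True
  then have [measurable]: "f \<in> borel_measurable borel" by simp
  have "(\<integral>x. f x \<partial>lborel) = \<bar>c\<bar> ^ DIM('a) * (\<integral>x. f (c *\<^sub>R x) \<partial>lborel)"
    using assms True integrable_lborel_scaleR_iff[OF assms, of f]
    by (subst lborel_affine[OF assms, of 0]) (simp add: integral_density integral_distr)
  then show ?thesis using assms by simp
next
  case False
  then show ?thesis
    using assms by (simp add: integrable_lborel_scaleR_iff not_integrable_integral_eq)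
qed

definition dilate :: "real \<Rightarrow> real \<Rightarrow> ('a::euclidean_space \<Rightarrow> real) \<Rightarrow> 'a \<Rightarrow> real" where
  "dilate l t u x = l * u (t *\<^sub>R x)"

lemma borel_measurable_dilate:
  "u \<in> borel_measurable lborel \<Longrightarrow> dilate l t u \<in> borel_measurable lborel"
  unfolding dilate_def[abs_def] by simp

lemma L2_sq_dilate:
  fixes u :: "'a::euclidean_space \<Rightarrow> real"
  assumes "u \<in> borel_measurable lborel" "0 < t"
  shows "L2_sq (dilate l t u) = ennreal (l\<^sup>2 / t ^ DIM('a)) * L2_sq u"
proof -
  have [measurable]: "u \<in> borel_measurable borel" using assms by simp
  have "L2_sq (dilate l t u) = (\<integral>\<^sup>+x. ennreal (l\<^sup>2) * ennreal ((u (t *\<^sub>R x))\<^sup>2) \<partial>lborel)"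
    unfolding L2_sq_def dilate_def
    by (intro nn_integral_cong) (simp add: ennreal_mult[symmetric] power_mult_distrib)
  also have "\<dots> = ennreal (l\<^sup>2) * (\<integral>\<^sup>+x. ennreal ((u (t *\<^sub>R x))\<^sup>2) \<partial>lborel)"
    by (rule nn_integral_cmult) measurable
  also have "(\<integral>\<^sup>+x. ennreal ((u (t *\<^sub>R x))\<^sup>2) \<partial>lborel) = ennreal (1 / t ^ DIM('a)) * L2_sq u"
    unfolding L2_sq_def using assms
    by (subst nn_integral_lborel_scaleR[where f="\<lambda>x. ennreal ((u x)\<^sup>2)"]) auto
  finally show ?thesis
    using assms by (simp add: ennreal_mult[symmetric] mult.assoc[symmetric])
qed

lemma gag_sq_dilate:
  fixes u :: "'a::euclidean_space \<Rightarrow> real"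
  assumes "u \<in> borel_measurable lborel" and "0 < t"
  shows "gag_sq s (dilate l t u)
    = ennreal (l\<^sup>2 * t powr (real DIM('a) + 2 * s) / t ^ (2 * DIM('a))) * gag_sq s u"
proof -
  have [measurable]: "u \<in> borel_measurable borel" using assms by simp
  define r where "r = real DIM('a) + 2 * s"
  define F where "F q = ennreal ((u (fst q) - u (snd q))\<^sup>2 / norm (fst q - snd q) powr r)"
    for q :: "'a \<times> 'a"
  have "F \<in> borel_measurable (borel \<Otimes>\<^sub>M borel)" unfolding F_def by measurable
  then have [measurable]: "F \<in> borel_measurable borel" by (simp add: borel_prod)
  have integrand: "ennreal ((dilate l t u (fst p) - dilate l t u (snd p))\<^sup>2 / norm (fst p - snd p) powr r)
      = ennreal (l\<^sup>2 * t powr r) * F (t *\<^sub>R p)" for p :: "'a \<times> 'a"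
  proof -
    have "norm (t *\<^sub>R fst p - t *\<^sub>R snd p) powr r = t powr r * norm (fst p - snd p) powr r"
      using \<open>0 < t\<close> by (simp add: scaleR_diff_right[symmetric] powr_mult)
    then show ?thesis
      unfolding F_def dilate_def using \<open>0 < t\<close>
      by (simp add: ennreal_mult[symmetric] power_mult_distrib right_diff_distrib[symmetric])
  qed
  have "gag_sq s (dilate l t u) = (\<integral>\<^sup>+p. ennreal (l\<^sup>2 * t powr r) * F (t *\<^sub>R p) \<partial>lborel)"
    unfolding gag_sq_def lborel_prod r_def[symmetric] integrand ..
  also have "\<dots> = ennreal (l\<^sup>2 * t powr r) * (\<integral>\<^sup>+p. F (t *\<^sub>R p) \<partial>lborel)"
    by (rule nn_integral_cmult) measurable
  also have "(\<integral>\<^sup>+p. F (t *\<^sub>R p) \<partial>(lborel :: ('a \<times> 'a) measure))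
      = ennreal (1 / t ^ (2 * DIM('a))) * (\<integral>\<^sup>+p. F p \<partial>lborel)"
    using nn_integral_lborel_scaleR[of F t] \<open>0 < t\<close> by (simp add: mult_2)
  also have "(\<integral>\<^sup>+p. F p \<partial>lborel) = gag_sq s u"
    unfolding gag_sq_def lborel_prod F_def r_def ..
  finally show ?thesis
    using \<open>0 < t\<close> by (simp add: ennreal_mult[symmetric] mult.assoc[symmetric] r_def)
qed

lemma integral_comp_dilate:
  fixes u :: "'a::euclidean_space \<Rightarrow> real" and F :: "real \<Rightarrow> real"
  assumes "0 < t"
  shows "(\<integral>x. F (dilate l t u x) \<partial>lborel) = t powr - real DIM('a) * (\<integral>x. F (l * u x) \<partial>lborel)"
  using integral_lborel_scaleR[of t "\<lambda>x. F (l * u x)"] assms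
  by (simp add: dilate_def powr_minus powr_realpow divide_inverse mult.commute)

text \<open>For \<open>\<mu> = 1\<close> this is the mass-preserving dilation \<open>t \<star> u\<close> of the paper.\<close>

definition fibre :: "real \<Rightarrow> real \<Rightarrow> ('a::euclidean_space \<Rightarrow> real) \<Rightarrow> 'a \<Rightarrow> real" where
  "fibre \<mu> t = dilate (\<mu> * t powr (real DIM('a) / 2)) t"

lemma fibre_eq_cmult: "fibre \<mu> t u = (\<lambda>x. \<mu> * fibre 1 t u x)"
  by (simp add: fibre_def dilate_def fun_eq_iff)

lemma L2_sq_fibre:
  fixes u :: "'a::euclidean_space \<Rightarrow> real"
  assumes "u \<in> borel_measurable lborel" "0 < t"
  shows "L2_sq (fibre \<mu> t u) = ennreal (\<mu>\<^sup>2) * L2_sq u"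
proof -
  define D where "D = real DIM('a)"
  have "(t powr (D / 2))\<^sup>2 = t powr D" "t ^ DIM('a) = t powr D"
    using \<open>0 < t\<close> by (simp_all add: power2_eq_square powr_add[symmetric] powr_realpow D_def)
  then have "(\<mu> * t powr (D / 2))\<^sup>2 / t ^ DIM('a) = \<mu>\<^sup>2"
    using \<open>0 < t\<close> by (simp add: power_mult_distrib)
  then show ?thesis using L2_sq_dilate[OF assms] by (simp add: fibre_def D_def)
qed

lemma gag_sq_fibre:
  fixes u :: "'a::euclidean_space \<Rightarrow> real"
  assumes "u \<in> borel_measurable lborel" "0 < t"
  shows "gag_sq s (fibre \<mu> t u) = ennreal (\<mu>\<^sup>2 * t powr (2 * s)) * gag_sq s u"
proof -
  define D where "D = real DIM('a)"
  have "(t powr (D / 2))\<^sup>2 = t powr D"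
    by (simp add: power2_eq_square powr_add[symmetric])
  moreover have "t ^ (2 * DIM('a)) = t powr D * t powr D"
    using \<open>0 < t\<close> by (simp only: mult_2 power_add D_def powr_realpow)
  moreover have "t powr (D + 2 * s) = t powr D * t powr (2 * s)"
    by (rule powr_add)
  ultimately have "(\<mu> * t powr (D / 2))\<^sup>2 * t powr (D + 2 * s) / t ^ (2 * DIM('a)) = \<mu>\<^sup>2 * t powr (2 * s)"
    using \<open>0 < t\<close> by (simp add: power_mult_distrib)
  then show ?thesis using gag_sq_dilate[OF assms] by (simp add: fibre_def D_def)
qed

lemma integral_comp_fibre:
  fixes u :: "'a::euclidean_space \<Rightarrow> real"
  assumes "0 < t"
  shows "(\<integral>x. F (fibre \<mu> t u x) \<partial>lborel)
    = t powr - real DIM('a) * (\<integral>x. F (\<mu> * t powr (real DIM('a) / 2) * u x) \<partial>lborel)"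
  unfolding fibre_def using assms by (rule integral_comp_dilate)

lemma borel_measurable_fibre:
  "u \<in> borel_measurable lborel \<Longrightarrow> fibre \<mu> t u \<in> borel_measurable lborel"
  unfolding fibre_def by (rule borel_measurable_dilate)

lemma fibre_in_Hs1s2:
  assumes "u \<in> Hs1s2 s1 s2" "0 < t"
  shows "fibre \<mu> t u \<in> Hs1s2 s1 s2"
proof -
  have "u \<in> borel_measurable lborel" using assms by (simp add: Hs1s2_def)
  then have "fibre \<mu> t u \<in> borel_measurable lborel" by (rule borel_measurable_fibre)
  then show ?thesis
    using assms by (simp add: Hs1s2_def L2_sq_fibre gag_sq_fibre ennreal_mult_less_top)
qed

definition kinetic :: "real \<Rightarrow> real \<Rightarrow> ('a::euclidean_space \<Rightarrow> real) \<Rightarrow> real" where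
  "kinetic s1 s2 u = enn2real (gag_sq s1 u) + enn2real (gag_sq s2 u)"

lemma kinetic_nonneg: "0 \<le> kinetic s1 s2 u"
  by (simp add: kinetic_def)

lemma Ifun_eq_kinetic: "Ifun s1 s2 g u = kinetic s1 s2 u / 2 - (\<integral>x. Gprim g (u x) \<partial>lborel)"
  by (simp add: Ifun_def kinetic_def)

lemma gag_sq_cmult:
  "v \<in> borel_measurable lborel \<Longrightarrow> gag_sq s (\<lambda>x. c * v x) = ennreal (c\<^sup>2) * gag_sq s v"
  using gag_sq_dilate[of v 1 s c] by (simp add: dilate_def[abs_def])

lemma kinetic_cmult:
  "v \<in> borel_measurable lborel \<Longrightarrow> kinetic s1 s2 (\<lambda>x. c * v x) = c\<^sup>2 * kinetic s1 s2 v"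
  by (simp add: kinetic_def gag_sq_cmult enn2real_mult algebra_simps)

lemma Ifun_fibre:
  fixes u :: "'a::euclidean_space \<Rightarrow> real"
  assumes "u \<in> borel_measurable lborel" "0 < t"
  shows "Ifun s1 s2 g (fibre \<mu> t u)
    = \<mu>\<^sup>2 * (t powr (2 * s1) * enn2real (gag_sq s1 u) + t powr (2 * s2) * enn2real (gag_sq s2 u)) / 2
      - t powr - real DIM('a) * (\<integral>x. Gprim g (\<mu> * t powr (real DIM('a) / 2) * u x) \<partial>lborel)"
  using assms
  by (simp add: Ifun_def gag_sq_fibre integral_comp_fibre enn2real_mult algebra_simps add_divide_distrib)

lemma Pinf_fibre:
  fixes u :: "'a::euclidean_space \<Rightarrow> real"
  assumes "u \<in> borel_measurable lborel" "0 < t"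
  shows "Pinf s1 s2 g (fibre \<mu> t u)
    = \<mu>\<^sup>2 * (s1 * t powr (2 * s1) * enn2real (gag_sq s1 u) + s2 * t powr (2 * s2) * enn2real (gag_sq s2 u))
      - real DIM('a) * (t powr - real DIM('a) * (\<integral>x. Gtil g (\<mu> * t powr (real DIM('a) / 2) * u x) \<partial>lborel))"
  using assms
  by (simp add: Pinf_def gag_sq_fibre integral_comp_fibre enn2real_mult algebra_simps)

section \<open>The nonlinearity\<close>

locale ar_nonlinearity =
  fixes g :: "real \<Rightarrow> real" and \<alpha> \<beta> :: real
  assumes continuous_g: "continuous_on UNIV g"
    and two_less_alpha: "2 < \<alpha>" and alpha_less_beta: "\<alpha> < \<beta>"
    and alpha_Gprim_le: "\<And>s. \<alpha> * Gprim g s \<le> g s * s"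
    and beta_Gprim_ge: "\<And>s. g s * s \<le> \<beta> * Gprim g s"
    and Gtil_differentiable: "\<And>s. Gtil g differentiable (at s)"
    and alpha_Gtil_le: "\<And>s. \<alpha> * Gtil g s \<le> deriv (Gtil g) s * s"
begin

lemma Gprim_has_real_derivative: "(Gprim g has_real_derivative g x) (at x)"
proof -
  define a where "a = - \<bar>x\<bar> - 1"
  define b where "b = \<bar>x\<bar> + 1"
  have "((\<lambda>u. LBINT y=0..u. g y) has_vector_derivative g x) (at x within {a..b})"
    using interval_integral_FTC2[of a 0 b g x] continuous_on_subset[OF continuous_g]
    by (auto simp: a_def b_def zero_ereal_def)
  then have "((\<lambda>u. LBINT y=0..u. g y) has_vector_derivative g x) (at x within {a<..<b})"
    by (rule has_vector_derivative_within_subset) auto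
  then have "((\<lambda>u. LBINT y=0..u. g y) has_vector_derivative g x) (at x)"
    by (subst (asm) has_vector_derivative_within_open) (auto simp: a_def b_def)
  then show ?thesis
    by (simp add: has_real_derivative_iff_has_vector_derivative Gprim_def[abs_def])
qed

lemma Gtil_has_real_derivative: "(Gtil g has_real_derivative deriv (Gtil g) x) (at x)"
  using Gtil_differentiable DERIV_deriv_iff_real_differentiable by blast

lemma continuous_on_Gprim: "continuous_on UNIV (Gprim g)"
  using Gprim_has_real_derivative by (meson DERIV_isCont continuous_at_imp_continuous_on)

lemma continuous_on_Gtil: "continuous_on UNIV (Gtil g)"
  using Gtil_has_real_derivative by (meson DERIV_isCont continuous_at_imp_continuous_on)

lemma borel_measurable_Gprim [measurable]: "Gprim g \<in> borel_measurable borel"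
  by (rule borel_measurable_continuous_onI[OF continuous_on_Gprim])

lemma borel_measurable_Gtil [measurable]: "Gtil g \<in> borel_measurable borel"
  by (rule borel_measurable_continuous_onI[OF continuous_on_Gtil])

lemma Gprim_scaled_alpha_mono:
  assumes "0 < l" "l \<le> l'"
  shows "Gprim g (l * s) * l powr - \<alpha> \<le> Gprim g (l' * s) * l' powr - \<alpha>"
proof (rule DERIV_nonneg_imp_nondecreasing_pos[where f="\<lambda>l. Gprim g (l * s) * l powr - \<alpha>"])
  fix x :: real assume "0 < x"
  then show "((\<lambda>l. Gprim g (l * s) * l powr - \<alpha>) has_real_derivative
      g (x * s) * s * x powr - \<alpha> + Gprim g (x * s) * (- \<alpha> * x powr (- \<alpha> - 1))) (at x)"
    by (auto intro!: derivative_eq_intros DERIV_chain2[OF Gprim_has_real_derivative]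
        simp: powr_diff)
next
  fix x :: real assume "l \<le> x"
  then have "g (x * s) * s * x powr - \<alpha> + Gprim g (x * s) * (- \<alpha> * x powr (- \<alpha> - 1))
      = x powr (- \<alpha> - 1) * (g (x * s) * (x * s) - \<alpha> * Gprim g (x * s))"
    using \<open>0 < l\<close> by (simp add: powr_diff powr_minus field_simps)
  also have "\<dots> \<ge> 0" using alpha_Gprim_le[of "x * s"] by simp
  finally show "0 \<le> g (x * s) * s * x powr - \<alpha> + Gprim g (x * s) * (- \<alpha> * x powr (- \<alpha> - 1))" .
qed (use assms in auto)

lemma Gprim_scaled_beta_antimono:
  assumes "0 < l" "l \<le> l'"
  shows "Gprim g (l' * s) * l' powr - \<beta> \<le> Gprim g (l * s) * l powr - \<beta>"
proof -
  have "- (Gprim g (l * s) * l powr - \<beta>) \<le> - (Gprim g (l' * s) * l' powr - \<beta>)"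
  proof (rule DERIV_nonneg_imp_nondecreasing_pos[where f="\<lambda>l. - (Gprim g (l * s) * l powr - \<beta>)"])
    fix x :: real assume "0 < x"
    then show "((\<lambda>l. - (Gprim g (l * s) * l powr - \<beta>)) has_real_derivative
        - (g (x * s) * s * x powr - \<beta> + Gprim g (x * s) * (- \<beta> * x powr (- \<beta> - 1)))) (at x)"
      by (auto intro!: derivative_eq_intros DERIV_chain2[OF Gprim_has_real_derivative]
          simp: powr_diff)
  next
    fix x :: real assume "l \<le> x"
    then have "- (g (x * s) * s * x powr - \<beta> + Gprim g (x * s) * (- \<beta> * x powr (- \<beta> - 1)))
        = x powr (- \<beta> - 1) * (\<beta> * Gprim g (x * s) - g (x * s) * (x * s))"
      using \<open>0 < l\<close> by (simp add: powr_diff powr_minus field_simps)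
    also have "\<dots> \<ge> 0" using beta_Gprim_ge[of "x * s"] by simp
    finally show "0 \<le> - (g (x * s) * s * x powr - \<beta> + Gprim g (x * s) * (- \<beta> * x powr (- \<beta> - 1)))" .
  qed (use assms in auto)
  then show ?thesis by simp
qed

lemma Gtil_scaled_alpha_mono:
  assumes "0 < l" "l \<le> l'"
  shows "Gtil g (l * s) * l powr - \<alpha> \<le> Gtil g (l' * s) * l' powr - \<alpha>"
proof (rule DERIV_nonneg_imp_nondecreasing_pos[where f="\<lambda>l. Gtil g (l * s) * l powr - \<alpha>"])
  fix x :: real assume "0 < x"
  then show "((\<lambda>l. Gtil g (l * s) * l powr - \<alpha>) has_real_derivative
      deriv (Gtil g) (x * s) * s * x powr - \<alpha> + Gtil g (x * s) * (- \<alpha> * x powr (- \<alpha> - 1))) (at x)"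
    by (auto intro!: derivative_eq_intros DERIV_chain2[OF Gtil_has_real_derivative]
        simp: powr_diff)
next
  fix x :: real assume "l \<le> x"
  then have "deriv (Gtil g) (x * s) * s * x powr - \<alpha> + Gtil g (x * s) * (- \<alpha> * x powr (- \<alpha> - 1))
      = x powr (- \<alpha> - 1) * (deriv (Gtil g) (x * s) * (x * s) - \<alpha> * Gtil g (x * s))"
    using \<open>0 < l\<close> by (simp add: powr_diff powr_minus field_simps)
  also have "\<dots> \<ge> 0" using alpha_Gtil_le[of "x * s"] by simp
  finally show "0 \<le> deriv (Gtil g) (x * s) * s * x powr - \<alpha> + Gtil g (x * s) * (- \<alpha> * x powr (- \<alpha> - 1))" .
qed (use assms in auto)

lemma Gprim_scale_ge_alpha: "1 \<le> l \<Longrightarrow> l powr \<alpha> * Gprim g s \<le> Gprim g (l * s)"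
  using Gprim_scaled_alpha_mono[of 1 l s] by (simp add: powr_minus field_simps)

lemma Gprim_scale_le_beta: "1 \<le> l \<Longrightarrow> Gprim g (l * s) \<le> l powr \<beta> * Gprim g s"
  using Gprim_scaled_beta_antimono[of 1 l s] by (simp add: powr_minus field_simps)

lemma Gprim_scale_ge_beta: "0 < l \<Longrightarrow> l \<le> 1 \<Longrightarrow> l powr \<beta> * Gprim g s \<le> Gprim g (l * s)"
  using Gprim_scaled_beta_antimono[of l 1 s] by (simp add: powr_minus field_simps)

lemma Gprim_scale_le_alpha: "0 < l \<Longrightarrow> l \<le> 1 \<Longrightarrow> Gprim g (l * s) \<le> l powr \<alpha> * Gprim g s"
  using Gprim_scaled_alpha_mono[of l 1 s] by (simp add: powr_minus field_simps)

lemma Gtil_scale_ge_alpha: "1 \<le> l \<Longrightarrow> l powr \<alpha> * Gtil g s \<le> Gtil g (l * s)"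
  using Gtil_scaled_alpha_mono[of 1 l s] by (simp add: powr_minus field_simps)

lemma Gtil_scale_le_alpha: "0 < l \<Longrightarrow> l \<le> 1 \<Longrightarrow> Gtil g (l * s) \<le> l powr \<alpha> * Gtil g s"
  using Gtil_scaled_alpha_mono[of l 1 s] by (simp add: powr_minus field_simps)

lemma Gprim_nonneg: "0 \<le> Gprim g s"
proof -
  have "(1/2) powr \<beta> * Gprim g s \<le> (1/2) powr \<alpha> * Gprim g s"
    using Gprim_scale_ge_beta[of "1/2" s] Gprim_scale_le_alpha[of "1/2" s] by simp
  moreover have "(1/2::real) powr \<beta> < (1/2) powr \<alpha>"
    using alpha_less_beta by (intro powr_less_mono') auto
  ultimately show ?thesis by (simp add: mult_le_cancel_right)
qed

lemma Gtil_ge_Gprim: "(\<alpha> - 2) / 2 * Gprim g s \<le> Gtil g s"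
  using alpha_Gprim_le[of s] by (simp add: Gtil_def field_simps)

lemma Gtil_le_Gprim: "Gtil g s \<le> (\<beta> - 2) / 2 * Gprim g s"
  using beta_Gprim_ge[of s] by (simp add: Gtil_def field_simps)

lemma Gtil_nonneg: "0 \<le> Gtil g s"
  using Gtil_ge_Gprim[of s] Gprim_nonneg[of s] two_less_alpha
  by (smt (verit) divide_nonneg_nonneg mult_nonneg_nonneg)

lemma Gprim_le_Gtil: "Gprim g s \<le> 2 / (\<alpha> - 2) * Gtil g s"
  using Gtil_ge_Gprim[of s] two_less_alpha by (simp add: field_simps)

lemma Gprim_scale_le: "0 < l \<Longrightarrow> Gprim g (l * s) \<le> (l powr \<alpha> + l powr \<beta>) * Gprim g s"
  using Gprim_scale_le_alpha[of l s] Gprim_scale_le_beta[of l s] Gprim_nonneg[of s]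
  by (cases "l \<le> 1") (auto simp: distrib_right intro: order.trans add_increasing2 add_increasing)

lemma Gtil_scale_le:
  assumes "0 < l"
  shows "Gtil g (l * s) \<le> (\<beta> - 2) / (\<alpha> - 2) * (l powr \<alpha> + l powr \<beta>) * Gtil g s"
proof -
  have "Gtil g (l * s) \<le> (\<beta> - 2) / 2 * Gprim g (l * s)" by (rule Gtil_le_Gprim)
  also have "\<dots> \<le> (\<beta> - 2) / 2 * ((l powr \<alpha> + l powr \<beta>) * Gprim g s)"
    using Gprim_scale_le[OF assms, of s] alpha_less_beta two_less_alpha
    by (intro mult_left_mono) auto
  also have "\<dots> \<le> (\<beta> - 2) / 2 * ((l powr \<alpha> + l powr \<beta>) * (2 / (\<alpha> - 2) * Gtil g s))"
    using Gprim_le_Gtil[of s] alpha_less_beta two_less_alpha by (intro mult_left_mono) auto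
  also have "\<dots> = (\<beta> - 2) / (\<alpha> - 2) * (l powr \<alpha> + l powr \<beta>) * Gtil g s"
    using two_less_alpha by (simp add: field_simps)
  finally show ?thesis .
qed

lemma Gprim_scale_ge_min: "0 < l \<Longrightarrow> min (l powr 2) (l powr \<beta>) * Gprim g s \<le> Gprim g (l * s)"
proof (cases "l \<le> 1")
  case True
  assume "0 < l"
  have "min (l powr 2) (l powr \<beta>) * Gprim g s \<le> l powr \<beta> * Gprim g s"
    using Gprim_nonneg[of s] by (intro mult_right_mono) auto
  then show ?thesis using Gprim_scale_ge_beta[OF \<open>0 < l\<close> True, of s] by linarith
next
  case False
  have "l powr 2 \<le> l powr \<alpha>" using False two_less_alpha by (intro powr_mono) auto
  then have "min (l powr 2) (l powr \<beta>) * Gprim g s \<le> l powr \<alpha> * Gprim g s"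
    using Gprim_nonneg[of s] by (intro mult_right_mono) auto
  then show ?thesis using Gprim_scale_ge_alpha[of l s] False by linarith
qed

lemma fibre_Gprim_has_real_derivative:
  assumes "0 < x"
  shows "((\<lambda>x. x powr - D * Gprim g (x powr (D / 2) * \<sigma>)) has_real_derivative
      D * x powr (- D - 1) * Gtil g (x powr (D / 2) * \<sigma>)) (at x)"
proof -
  have d1: "((\<lambda>x. x powr - D) has_real_derivative - D * x powr (- D - 1)) (at x)"
    using has_real_derivative_powr[OF assms, of "- D"] by simp
  have "((\<lambda>x. x powr (D / 2) * \<sigma>) has_real_derivative D / 2 * x powr (D / 2 - 1) * \<sigma>) (at x)"
    using has_real_derivative_powr[OF assms, of "D / 2"] by (intro DERIV_cmult_right) simp
  from DERIV_chain2[OF Gprim_has_real_derivative this]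
  have d2: "((\<lambda>x. Gprim g (x powr (D / 2) * \<sigma>)) has_real_derivative
      g (x powr (D / 2) * \<sigma>) * (D / 2 * x powr (D / 2 - 1) * \<sigma>)) (at x)" .
  have "x powr - D * x powr (D / 2 - 1) = x powr (- D - 1) * x powr (D / 2)"
    by (simp add: powr_add[symmetric])
  then have "- D * x powr (- D - 1) * Gprim g (x powr (D / 2) * \<sigma>)
      + g (x powr (D / 2) * \<sigma>) * (D / 2 * x powr (D / 2 - 1) * \<sigma>) * x powr - D
      = D * x powr (- D - 1) * Gtil g (x powr (D / 2) * \<sigma>)"
    by (simp add: Gtil_def algebra_simps)
  with DERIV_mult[OF d1 d2] show ?thesis by simp
qed

lemma Gprim_fibre_gain:
  fixes D t \<sigma> :: real
  assumes "0 < t" "0 < D"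
  defines "\<gamma> \<equiv> D * (\<alpha> - 2) / 2"
  shows "D * Gtil g \<sigma> * ((t powr \<gamma> - 1) / \<gamma>) \<le> t powr - D * Gprim g (t powr (D / 2) * \<sigma>) - Gprim g \<sigma>"
proof -
  have "0 < \<gamma>" using two_less_alpha \<open>0 < D\<close> by (simp add: \<gamma>_def)
  define \<psi> where "\<psi> x = x powr - D * Gprim g (x powr (D / 2) * \<sigma>) - D * Gtil g \<sigma> * ((x powr \<gamma> - 1) / \<gamma>)"
    for x
  have "\<psi> 1 \<le> \<psi> t"
  proof (rule DERIV_sign_change_imp_min_at_1[OF _ _ _ \<open>0 < t\<close>])
    fix x :: real assume "0 < x"
    have e: "\<gamma> - 1 = - D - 1 + D * \<alpha> / 2" by (simp add: \<gamma>_def field_simps)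
    have "\<gamma> * x powr (\<gamma> - 1) / \<gamma> = x powr (- D - 1) * x powr (D * \<alpha> / 2)"
      using \<open>0 < \<gamma>\<close> by (simp only: e powr_add) simp
    moreover have "((\<lambda>x. (x powr \<gamma> - 1) / \<gamma>) has_real_derivative \<gamma> * x powr (\<gamma> - 1) / \<gamma>) (at x)"
      using \<open>0 < x\<close> by (auto intro!: derivative_eq_intros)
    ultimately have "(\<psi> has_real_derivative D * x powr (- D - 1) * Gtil g (x powr (D / 2) * \<sigma>)
        - D * Gtil g \<sigma> * (x powr (- D - 1) * x powr (D * \<alpha> / 2))) (at x)"
      unfolding \<psi>_def by (intro DERIV_diff DERIV_cmult fibre_Gprim_has_real_derivative \<open>0 < x\<close>) simp
    then show "(\<psi> has_real_derivative
        D * x powr (- D - 1) * (Gtil g (x powr (D / 2) * \<sigma>) - x powr (D * \<alpha> / 2) * Gtil g \<sigma>)) (at x)"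
      by (rule DERIV_cong) (simp add: algebra_simps)
  next
    fix x :: real assume "1 \<le> x"
    then have "x powr (D * \<alpha> / 2) * Gtil g \<sigma> \<le> Gtil g (x powr (D / 2) * \<sigma>)"
      using Gtil_scale_ge_alpha[of "x powr (D / 2)" \<sigma>] \<open>0 < D\<close>
      by (simp add: ge_one_powr_ge_zero powr_powr)
    then show "0 \<le> D * x powr (- D - 1) * (Gtil g (x powr (D / 2) * \<sigma>) - x powr (D * \<alpha> / 2) * Gtil g \<sigma>)"
      using \<open>0 < D\<close> by simp
  next
    fix x :: real assume "0 < x" "x \<le> 1"
    then have "Gtil g (x powr (D / 2) * \<sigma>) \<le> x powr (D * \<alpha> / 2) * Gtil g \<sigma>"
      using Gtil_scale_le_alpha[of "x powr (D / 2)" \<sigma>] \<open>0 < D\<close>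
      by (simp add: powr_le1 powr_powr)
    then show "D * x powr (- D - 1) * (Gtil g (x powr (D / 2) * \<sigma>) - x powr (D * \<alpha> / 2) * Gtil g \<sigma>) \<le> 0"
      using \<open>0 < D\<close> by (simp add: mult_nonneg_nonpos)
  qed
  then show ?thesis by (simp add: \<psi>_def)
qed

lemma integrable_Gtil_scale_iff:
  fixes u :: "'a::euclidean_space \<Rightarrow> real"
  assumes "u \<in> borel_measurable lborel" "0 < l"
  shows "integrable lborel (\<lambda>x. Gtil g (l * u x)) \<longleftrightarrow> integrable lborel (\<lambda>x. Gtil g (u x))"
proof -
  have *: "integrable lborel (\<lambda>x. Gtil g (l * v x))"
    if "v \<in> borel_measurable lborel" "integrable lborel (\<lambda>x. Gtil g (v x))" "0 < l"
    for v :: "'a \<Rightarrow> real" and l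
  proof (rule integrable_nonneg_le_cmult[where c="(\<beta> - 2) / (\<alpha> - 2) * (l powr \<alpha> + l powr \<beta>)",
        OF that(2) _ Gtil_nonneg Gtil_scale_le[OF \<open>0 < l\<close>]])
    have [measurable]: "v \<in> borel_measurable borel" using that(1) by simp
    show "(\<lambda>x. Gtil g (l * v x)) \<in> borel_measurable lborel" by measurable
  qed
  have "integrable lborel (\<lambda>x. Gtil g ((1 / l) * (l * u x)))"
    if "integrable lborel (\<lambda>x. Gtil g (l * u x))"
    using *[of "\<lambda>x. l * u x" "1 / l"] that assms by simp
  then show ?thesis using *[OF assms(1) _ assms(2)] assms(2) by auto
qed

lemma integrable_Gprim_iff_Gtil:
  fixes u :: "'a::euclidean_space \<Rightarrow> real"
  assumes "u \<in> borel_measurable lborel"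
  shows "integrable lborel (\<lambda>x. Gprim g (u x)) \<longleftrightarrow> integrable lborel (\<lambda>x. Gtil g (u x))"
proof -
  have [measurable]: "u \<in> borel_measurable borel" using assms by simp
  show ?thesis
  proof
    assume "integrable lborel (\<lambda>x. Gprim g (u x))"
    then show "integrable lborel (\<lambda>x. Gtil g (u x))"
      by (rule integrable_nonneg_le_cmult[OF _ _ Gtil_nonneg Gtil_le_Gprim]) measurable
  next
    assume "integrable lborel (\<lambda>x. Gtil g (u x))"
    then show "integrable lborel (\<lambda>x. Gprim g (u x))"
      by (rule integrable_nonneg_le_cmult[OF _ _ Gprim_nonneg Gprim_le_Gtil]) measurable
  qed
qed

lemma integral_Gprim_le_Gtil:
  "u \<in> borel_measurable lborel \<Longrightarrow>
    (\<integral>x. Gprim g (u x) \<partial>lborel) \<le> 2 / (\<alpha> - 2) * (\<integral>x. Gtil g (u x) \<partial>lborel)"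
  by (rule integral_le_cmult_integral[OF integrable_Gprim_iff_Gtil[symmetric] Gprim_le_Gtil])

lemma integral_Gtil_scale_ge_alpha:
  "u \<in> borel_measurable lborel \<Longrightarrow> 1 \<le> l \<Longrightarrow>
    l powr \<alpha> * (\<integral>x. Gtil g (u x) \<partial>lborel) \<le> (\<integral>x. Gtil g (l * u x) \<partial>lborel)"
  by (rule cmult_integral_le_integral[OF integrable_Gtil_scale_iff[symmetric] Gtil_scale_ge_alpha])
    auto

lemma integral_Gtil_scale_le_alpha:
  "u \<in> borel_measurable lborel \<Longrightarrow> 0 < l \<Longrightarrow> l \<le> 1 \<Longrightarrow>
    (\<integral>x. Gtil g (l * u x) \<partial>lborel) \<le> l powr \<alpha> * (\<integral>x. Gtil g (u x) \<partial>lborel)"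
  by (rule integral_le_cmult_integral[OF integrable_Gtil_scale_iff[symmetric] Gtil_scale_le_alpha])

lemma integral_Gtil_scale_eq_0:
  fixes u :: "'a::euclidean_space \<Rightarrow> real"
  assumes "u \<in> borel_measurable lborel" "(\<integral>x. Gtil g (u x) \<partial>lborel) = 0" "0 < l"
  shows "(\<integral>x. Gtil g (l * u x) \<partial>lborel) = 0"
proof -
  have "(\<integral>x. Gtil g (l * u x) \<partial>lborel)
      \<le> (\<beta> - 2) / (\<alpha> - 2) * (l powr \<alpha> + l powr \<beta>) * (\<integral>x. Gtil g (u x) \<partial>lborel)"
    by (rule integral_le_cmult_integral[OF integrable_Gtil_scale_iff[symmetric] Gtil_scale_le])
      (use assms in auto)
  then show ?thesis
    using assms(2) by (simp add: Gtil_nonneg antisym integral_nonneg)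
qed

lemma integral_Gprim_scale_ge_min:
  fixes u :: "'a::euclidean_space \<Rightarrow> real"
  assumes "u \<in> borel_measurable lborel" "0 < l"
  shows "min (l powr 2) (l powr \<beta>) * (\<integral>x. Gprim g (u x) \<partial>lborel) \<le> (\<integral>x. Gprim g (l * u x) \<partial>lborel)"
proof (rule cmult_integral_le_integral[OF _ Gprim_scale_ge_min[OF assms(2)]])
  have "(\<lambda>x. l * u x) \<in> borel_measurable lborel" using assms(1) by simp
  then show "integrable lborel (\<lambda>x. Gprim g (u x)) \<longleftrightarrow> integrable lborel (\<lambda>x. Gprim g (l * u x))"
    using assms by (simp add: integrable_Gprim_iff_Gtil integrable_Gtil_scale_iff)
qed

lemma continuous_on_integral_Gtil_scale:
  fixes u :: "'a::euclidean_space \<Rightarrow> real"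
  assumes "u \<in> borel_measurable lborel" "integrable lborel (\<lambda>x. Gtil g (u x))"
  shows "continuous_on {0<..} (\<lambda>l. \<integral>x. Gtil g (l * u x) \<partial>lborel)"
proof (rule continuous_on_sequentiallyI)
  fix X :: "nat \<Rightarrow> real" and a :: real
  assume X: "\<forall>n. X n \<in> {0<..}" and "X \<longlonglongrightarrow> a"
  then obtain B where B: "\<And>n. norm (X n) \<le> B"
    using convergent_imp_Bseq[of X] unfolding Bseq_def convergent_def by auto
  have [measurable]: "u \<in> borel_measurable borel" using assms(1) by simp
  define C where "C = (\<beta> - 2) / (\<alpha> - 2) * (B powr \<alpha> + B powr \<beta>)"
  show "(\<lambda>n. \<integral>x. Gtil g (X n * u x) \<partial>lborel) \<longlonglongrightarrow> (\<integral>x. Gtil g (a * u x) \<partial>lborel)"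
  proof (rule integral_dominated_convergence[where w="\<lambda>x. C * Gtil g (u x)"])
    show "AE x in lborel. (\<lambda>n. Gtil g (X n * u x)) \<longlonglongrightarrow> Gtil g (a * u x)"
      using continuous_on_Gtil \<open>X \<longlonglongrightarrow> a\<close>
      by (intro AE_I2 isCont_tendsto_compose[where g="Gtil g"] tendsto_intros)
        (auto simp: continuous_on_eq_continuous_at)
    show "AE x in lborel. norm (Gtil g (X n * u x)) \<le> C * Gtil g (u x)" for n
    proof (intro AE_I2)
      fix x
      have "0 < X n" "X n \<le> B" using X B[of n] by auto
      then have "Gtil g (X n * u x) \<le> (\<beta> - 2) / (\<alpha> - 2) * (X n powr \<alpha> + X n powr \<beta>) * Gtil g (u x)"
        by (intro Gtil_scale_le)
      also have "\<dots> \<le> C * Gtil g (u x)"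
        unfolding C_def using \<open>0 < X n\<close> \<open>X n \<le> B\<close> two_less_alpha alpha_less_beta Gtil_nonneg[of "u x"]
        by (intro mult_right_mono mult_left_mono add_mono powr_mono2) auto
      finally show "norm (Gtil g (X n * u x)) \<le> C * Gtil g (u x)" by (simp add: Gtil_nonneg)
    qed
  qed (use assms(2) in simp_all)
qed

lemma integral_Gprim_fibre_gain:
  fixes u :: "'a::euclidean_space \<Rightarrow> real" and D t :: real
  assumes "u \<in> borel_measurable lborel" "0 < t" "0 < D"
  defines "\<gamma> \<equiv> D * (\<alpha> - 2) / 2"
  shows "D * (\<integral>x. Gtil g (u x) \<partial>lborel) * ((t powr \<gamma> - 1) / \<gamma>)
    \<le> t powr - D * (\<integral>x. Gprim g (t powr (D / 2) * u x) \<partial>lborel) - (\<integral>x. Gprim g (u x) \<partial>lborel)"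
proof -
  have scaled_measurable: "(\<lambda>x. t powr (D / 2) * u x) \<in> borel_measurable lborel"
    using assms(1) by simp
  show ?thesis
  proof (cases "integrable lborel (\<lambda>x. Gtil g (u x))")
    case True
    have int: "integrable lborel (\<lambda>x. Gprim g (u x))"
      "integrable lborel (\<lambda>x. Gprim g (t powr (D / 2) * u x))"
      using True assms scaled_measurable
      by (simp_all add: integrable_Gprim_iff_Gtil integrable_Gtil_scale_iff)
    have "(\<integral>x. D * Gtil g (u x) * ((t powr \<gamma> - 1) / \<gamma>) \<partial>lborel)
        \<le> (\<integral>x. t powr - D * Gprim g (t powr (D / 2) * u x) - Gprim g (u x) \<partial>lborel)"
    proof (rule integral_mono)
      show "integrable lborel (\<lambda>x. D * Gtil g (u x) * ((t powr \<gamma> - 1) / \<gamma>))"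
        using True by simp
      show "integrable lborel (\<lambda>x. t powr - D * Gprim g (t powr (D / 2) * u x) - Gprim g (u x))"
        using int by simp
      show "D * Gtil g (u x) * ((t powr \<gamma> - 1) / \<gamma>)
          \<le> t powr - D * Gprim g (t powr (D / 2) * u x) - Gprim g (u x)" for x
        using Gprim_fibre_gain[OF assms(2,3), of "u x"] unfolding \<gamma>_def .
    qed
    then show ?thesis using int by simp
  next
    case False
    then have "\<not> integrable lborel (\<lambda>x. Gprim g (u x))"
      "\<not> integrable lborel (\<lambda>x. Gprim g (t powr (D / 2) * u x))"
      using assms scaled_measurable
      by (simp_all add: integrable_Gprim_iff_Gtil integrable_Gtil_scale_iff)
    then show ?thesis using False by (simp add: not_integrable_integral_eq)
  qed
qed

lemma Ifun_cmult_le_ge_1: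
  fixes v :: "'a::euclidean_space \<Rightarrow> real"
  assumes "v \<in> borel_measurable lborel" "1 \<le> \<mu>"
  shows "Ifun s1 s2 g (\<lambda>x. \<mu> * v x) \<le> \<mu>\<^sup>2 * Ifun s1 s2 g v"
proof -
  have "\<mu> powr 2 \<le> \<mu> powr \<beta>" using assms two_less_alpha alpha_less_beta by (intro powr_mono) auto
  then have "\<mu>\<^sup>2 * (\<integral>x. Gprim g (v x) \<partial>lborel) \<le> (\<integral>x. Gprim g (\<mu> * v x) \<partial>lborel)"
    using integral_Gprim_scale_ge_min[OF assms(1), of \<mu>] assms(2)
    by (simp add: min_absorb1 powr_numeral)
  moreover have "Ifun s1 s2 g (\<lambda>x. \<mu> * v x)
      = \<mu>\<^sup>2 * (kinetic s1 s2 v / 2) - (\<integral>x. Gprim g (\<mu> * v x) \<partial>lborel)"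
    using assms(1) by (simp add: Ifun_eq_kinetic kinetic_cmult)
  ultimately show ?thesis
    by (simp add: Ifun_eq_kinetic[of s1 s2 g v] right_diff_distrib)
qed

lemma Ifun_cmult_le_le_1:
  fixes v :: "'a::euclidean_space \<Rightarrow> real"
  assumes "v \<in> borel_measurable lborel" "0 < \<mu>" "\<mu> \<le> 1"
  shows "Ifun s1 s2 g (\<lambda>x. \<mu> * v x)
    \<le> \<mu> powr \<beta> * Ifun s1 s2 g v + (1 - \<mu> powr (\<beta> - 2)) * kinetic s1 s2 (\<lambda>x. \<mu> * v x) / 2"
proof -
  define K where "K = kinetic s1 s2 v"
  have "\<mu> powr \<beta> \<le> \<mu> powr 2" using assms two_less_alpha alpha_less_beta by (intro powr_mono') auto
  then have "\<mu> powr \<beta> * (\<integral>x. Gprim g (v x) \<partial>lborel) \<le> (\<integral>x. Gprim g (\<mu> * v x) \<partial>lborel)"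
    using integral_Gprim_scale_ge_min[OF assms(1,2)] by (simp add: min_absorb2)
  then have "Ifun s1 s2 g (\<lambda>x. \<mu> * v x) \<le> \<mu>\<^sup>2 * K / 2 - \<mu> powr \<beta> * (\<integral>x. Gprim g (v x) \<partial>lborel)"
    using assms(1) by (simp add: Ifun_eq_kinetic kinetic_cmult K_def)
  also have "\<dots> = \<mu> powr \<beta> * (K / 2 - (\<integral>x. Gprim g (v x) \<partial>lborel)) + (\<mu>\<^sup>2 * K - \<mu> powr \<beta> * K) / 2"
    by (simp add: field_simps)
  also have "\<mu>\<^sup>2 * K - \<mu> powr \<beta> * K = (1 - \<mu> powr (\<beta> - 2)) * kinetic s1 s2 (\<lambda>x. \<mu> * v x)"
    using assms by (simp add: kinetic_cmult K_def powr_diff powr_realpow algebra_simps)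
  finally show ?thesis by (simp only: Ifun_eq_kinetic K_def)
qed

end

section \<open>The Pohozaev manifold\<close>

locale pohozaev_setting = ar_nonlinearity g \<alpha> \<beta>
  for g :: "real \<Rightarrow> real" and \<alpha> \<beta> :: real +
  fixes dim :: "'a::euclidean_space itself" and s1 s2 :: real
  assumes s1_pos: "0 < s1" and s1_less_s2: "s1 < s2"
    and mass_supercritical: "2 + 4 * s2 / real DIM('a) < \<alpha>"
begin

lemma s2_pos: "0 < s2"
  using s1_pos s1_less_s2 by simp

definition coercivity_const :: real where
  "coercivity_const = 1 / 2 - 2 * s2 / (real DIM('a) * (\<alpha> - 2))"

lemma coercivity_const_pos: "0 < coercivity_const"
  using mass_supercritical two_less_alpha by (simp add: coercivity_const_def field_simps)

lemma PmfdD: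
  fixes u :: "'a \<Rightarrow> real"
  assumes "u \<in> Pmfd s1 s2 g a"
  shows "u \<in> Hs1s2 s1 s2" "u \<in> borel_measurable lborel" "L2_sq u = ennreal a"
    "real DIM('a) * (\<integral>x. Gtil g (u x) \<partial>lborel)
      = s1 * enn2real (gag_sq s1 u) + s2 * enn2real (gag_sq s2 u)"
  using assms by (auto simp: Pmfd_def Sa_def Hs1s2_def Pinf_def)

lemma Ifun_ge_on_Pmfd:
  fixes u :: "'a \<Rightarrow> real"
  assumes "u \<in> Pmfd s1 s2 g a"
  shows "coercivity_const * kinetic s1 s2 u \<le> Ifun s1 s2 g u"
proof -
  define D where "D = real DIM('a)"
  define A1 where "A1 = enn2real (gag_sq s1 u)"
  define A2 where "A2 = enn2real (gag_sq s2 u)"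
  have "0 < D" "0 \<le> A1" by (simp_all add: D_def A1_def)
  have "(\<integral>x. Gprim g (u x) \<partial>lborel) \<le> 2 / (\<alpha> - 2) * (\<integral>x. Gtil g (u x) \<partial>lborel)"
    using integral_Gprim_le_Gtil PmfdD(2)[OF assms] .
  also have "\<dots> = 2 / (D * (\<alpha> - 2)) * (s1 * A1 + s2 * A2)"
    unfolding PmfdD(4)[OF assms, folded D_def A1_def A2_def, symmetric]
    using two_less_alpha \<open>0 < D\<close> by simp
  also have "\<dots> \<le> 2 / (D * (\<alpha> - 2)) * (s2 * A1 + s2 * A2)"
    using s1_less_s2 \<open>0 < D\<close> \<open>0 \<le> A1\<close> two_less_alpha
    by (intro mult_left_mono add_right_mono mult_right_mono) auto
  also have "\<dots> = (1 / 2 - coercivity_const) * kinetic s1 s2 u"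
    using two_less_alpha \<open>0 < D\<close>
    by (simp add: coercivity_const_def kinetic_def A1_def A2_def D_def field_simps)
  finally show ?thesis
    by (simp add: Ifun_eq_kinetic left_diff_distrib)
qed

lemma Ifun_nonneg_on_Pmfd:
  fixes u :: "'a \<Rightarrow> real"
  shows "u \<in> Pmfd s1 s2 g a \<Longrightarrow> 0 \<le> Ifun s1 s2 g u"
  using Ifun_ge_on_Pmfd[of u a] coercivity_const_pos kinetic_nonneg[of s1 s2 u]
  by (smt (verit) mult_nonneg_nonneg)

lemma exists_fibre_balance:
  fixes u :: "'a \<Rightarrow> real"
  assumes u: "u \<in> Pmfd s1 s2 g a" and "0 < \<mu>"
  defines "D \<equiv> real DIM('a)"
  shows "\<exists>t>0. D * (t powr - D * (\<integral>x. Gtil g (\<mu> * t powr (D / 2) * u x) \<partial>lborel))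
    = \<mu>\<^sup>2 * (s1 * t powr (2 * s1) * enn2real (gag_sq s1 u) + s2 * t powr (2 * s2) * enn2real (gag_sq s2 u))"
proof -
  define A1 where "A1 = enn2real (gag_sq s1 u)"
  define A2 where "A2 = enn2real (gag_sq s2 u)"
  define \<Psi> where "\<Psi> l = (\<integral>x. Gtil g (l * u x) \<partial>lborel)" for l
  have um: "u \<in> borel_measurable lborel" and K_eq: "D * \<Psi> 1 = s1 * A1 + s2 * A2"
    using PmfdD[OF u] by (simp_all add: D_def A1_def A2_def \<Psi>_def)
  have "0 < D" "0 \<le> A1" "0 \<le> A2" by (simp_all add: D_def A1_def A2_def)
  have "\<exists>t>0. D * (t powr - D * \<Psi> (\<mu> * t powr (D / 2)))
      = \<mu>\<^sup>2 * (s1 * t powr (2 * s1) * A1 + s2 * t powr (2 * s2) * A2)"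
  proof (cases "s1 * A1 + s2 * A2 = 0")
    case True
    \<comment> \<open>then \<open>\<Psi>\<close> vanishes on \<open>{0<..}\<close> and every \<open>t\<close> balances\<close>
    then have "A1 = 0" "A2 = 0"
      using s1_pos s1_less_s2 \<open>0 \<le> A1\<close> \<open>0 \<le> A2\<close> by (simp_all add: add_nonneg_eq_0_iff)
    moreover have "\<Psi> \<mu> = 0"
      using integral_Gtil_scale_eq_0[OF um _ \<open>0 < \<mu>\<close>] K_eq True \<open>0 < D\<close> by (simp add: \<Psi>_def)
    ultimately show ?thesis by (intro exI[of _ 1]) simp
  next
    case False
    then have "\<Psi> 1 \<noteq> 0" using K_eq by auto
    then have "integrable lborel (\<lambda>x. Gtil g (u x))"
      using not_integrable_integral_eq by (force simp: \<Psi>_def)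
    show ?thesis
    proof (rule exists_fibre_balance_root[where \<alpha>=\<alpha>])
      show "continuous_on {0<..} \<Psi>"
        unfolding \<Psi>_def by (rule continuous_on_integral_Gtil_scale) fact+
      show "l powr \<alpha> * \<Psi> 1 \<le> \<Psi> l" if "1 \<le> l" for l
        using integral_Gtil_scale_ge_alpha[OF um that] by (simp add: \<Psi>_def)
      show "\<Psi> l \<le> l powr \<alpha> * \<Psi> 1" if "0 < l" "l \<le> 1" for l
        using integral_Gtil_scale_le_alpha[OF um that] by (simp add: \<Psi>_def)
    qed (use K_eq \<open>0 < D\<close> \<open>0 \<le> A1\<close> \<open>0 \<le> A2\<close> \<open>0 < \<mu>\<close> s1_pos s1_less_s2 mass_supercritical
        in \<open>simp_all add: D_def\<close>)
  qed
  then show ?thesis by (simp add: A1_def A2_def \<Psi>_def)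
qed

lemma exists_fibre_in_Pmfd:
  fixes u :: "'a \<Rightarrow> real"
  assumes u: "u \<in> Pmfd s1 s2 g a" and "0 \<le> a" "0 < \<mu>"
  shows "\<exists>t>0. fibre \<mu> t u \<in> Pmfd s1 s2 g (\<mu>\<^sup>2 * a)"
proof -
  obtain t where "0 < t" and balance:
    "real DIM('a) * (t powr - real DIM('a) * (\<integral>x. Gtil g (\<mu> * t powr (real DIM('a) / 2) * u x) \<partial>lborel))
      = \<mu>\<^sup>2 * (s1 * t powr (2 * s1) * enn2real (gag_sq s1 u) + s2 * t powr (2 * s2) * enn2real (gag_sq s2 u))"
    using exists_fibre_balance[OF u \<open>0 < \<mu>\<close>] by blast
  have "fibre \<mu> t u \<in> Pmfd s1 s2 g (\<mu>\<^sup>2 * a)"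
    using PmfdD[OF u] \<open>0 < t\<close> \<open>0 \<le> a\<close>
    by (simp add: Pmfd_def Sa_def fibre_in_Hs1s2 L2_sq_fibre Pinf_fibre balance ennreal_mult)
  with \<open>0 < t\<close> show ?thesis by blast
qed

lemma Ifun_fibre_le:
  fixes u :: "'a \<Rightarrow> real"
  assumes u: "u \<in> Pmfd s1 s2 g a" and "0 < t"
  shows "Ifun s1 s2 g (fibre 1 t u) \<le> Ifun s1 s2 g u"
proof -
  define D where "D = real DIM('a)"
  define A1 where "A1 = enn2real (gag_sq s1 u)"
  define A2 where "A2 = enn2real (gag_sq s2 u)"
  define \<gamma> where "\<gamma> = D * (\<alpha> - 2) / 2"
  have um: "u \<in> borel_measurable lborel" and K_eq: "D * (\<integral>x. Gtil g (u x) \<partial>lborel) = s1 * A1 + s2 * A2"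
    using PmfdD[OF u] by (simp_all add: D_def A1_def A2_def)
  have "0 < D" "0 \<le> A1" "0 \<le> A2" by (simp_all add: D_def A1_def A2_def)
  have "2 * s2 \<le> \<gamma>"
    using mass_supercritical \<open>0 < D\<close> by (simp add: \<gamma>_def D_def field_simps)
  have slope: "t powr (2 * s) * A / 2 - A / 2 \<le> s * A * ((t powr \<gamma> - 1) / \<gamma>)"
    if "0 < s" "s \<le> s2" "0 \<le> A" for s A
  proof -
    have "(t powr (2 * s) - 1) / (2 * s) \<le> (t powr \<gamma> - 1) / \<gamma>"
      using that \<open>0 < t\<close> \<open>2 * s2 \<le> \<gamma>\<close> by (intro powr_minus_one_divide_mono) auto
    then have "s * A * ((t powr (2 * s) - 1) / (2 * s)) \<le> s * A * ((t powr \<gamma> - 1) / \<gamma>)"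
      using that by (intro mult_left_mono) auto
    moreover have "s * A * ((t powr (2 * s) - 1) / (2 * s)) = t powr (2 * s) * A / 2 - A / 2"
      using \<open>0 < s\<close> by (simp add: field_simps)
    ultimately show ?thesis by linarith
  qed
  have "(s1 * A1 + s2 * A2) * ((t powr \<gamma> - 1) / \<gamma>)
      \<le> t powr - D * (\<integral>x. Gprim g (t powr (D / 2) * u x) \<partial>lborel) - (\<integral>x. Gprim g (u x) \<partial>lborel)"
    using integral_Gprim_fibre_gain[OF um \<open>0 < t\<close> \<open>0 < D\<close>] unfolding K_eq \<gamma>_def .
  then have gain: "s1 * A1 * ((t powr \<gamma> - 1) / \<gamma>) + s2 * A2 * ((t powr \<gamma> - 1) / \<gamma>)
      \<le> t powr - D * (\<integral>x. Gprim g (t powr (D / 2) * u x) \<partial>lborel) - (\<integral>x. Gprim g (u x) \<partial>lborel)"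
    by (simp only: distrib_right)
  have "Ifun s1 s2 g (fibre 1 t u)
      = (t powr (2 * s1) * A1 + t powr (2 * s2) * A2) / 2
        - t powr - D * (\<integral>x. Gprim g (t powr (D / 2) * u x) \<partial>lborel)"
    using Ifun_fibre[OF um \<open>0 < t\<close>, of s1 s2 g 1] by (simp add: D_def A1_def A2_def)
  moreover have "Ifun s1 s2 g u = (A1 + A2) / 2 - (\<integral>x. Gprim g (u x) \<partial>lborel)"
    by (simp add: Ifun_def A1_def A2_def)
  ultimately show ?thesis
    using slope[OF s1_pos less_imp_le[OF s1_less_s2] \<open>0 \<le> A1\<close>] slope[OF s2_pos order.refl \<open>0 \<le> A2\<close>] gain
    by argo
qed

definition transfer_factor :: "real \<Rightarrow> real" where
  "transfer_factor r = 1 - (1 - r powr ((\<beta> - 2) / 2)) / (2 * coercivity_const)"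

lemma Pmfd_transfer_up:
  fixes u :: "'a \<Rightarrow> real"
  assumes u: "u \<in> Pmfd s1 s2 g a" and "0 < a" "a \<le> b"
  shows "\<exists>w \<in> (Pmfd s1 s2 g b :: ('a \<Rightarrow> real) set). Ifun s1 s2 g w \<le> b / a * Ifun s1 s2 g u"
proof -
  define \<mu> where "\<mu> = sqrt (b / a)"
  have "1 \<le> \<mu>" "\<mu>\<^sup>2 = b / a" using assms by (simp_all add: \<mu>_def)
  then obtain t where "0 < t" and w: "fibre \<mu> t u \<in> Pmfd s1 s2 g b"
    using exists_fibre_in_Pmfd[OF u _, of \<mu>] assms by auto
  have "Ifun s1 s2 g (fibre \<mu> t u) = Ifun s1 s2 g (\<lambda>x. \<mu> * fibre 1 t u x)"
    by (subst fibre_eq_cmult) (rule refl)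
  also have "\<dots> \<le> \<mu>\<^sup>2 * Ifun s1 s2 g (fibre 1 t u)"
    using PmfdD(2)[OF u] \<open>0 < t\<close> \<open>1 \<le> \<mu>\<close>
    by (intro Ifun_cmult_le_ge_1 borel_measurable_fibre)
  also have "\<dots> \<le> \<mu>\<^sup>2 * Ifun s1 s2 g u"
    using Ifun_fibre_le[OF u \<open>0 < t\<close>] by (intro mult_left_mono) auto
  finally have "Ifun s1 s2 g (fibre \<mu> t u) \<le> b / a * Ifun s1 s2 g u"
    unfolding \<open>\<mu>\<^sup>2 = b / a\<close> .
  with w show ?thesis by blast
qed

lemma Pmfd_transfer_down:
  fixes u :: "'a \<Rightarrow> real"
  assumes u: "u \<in> Pmfd s1 s2 g a" and "0 < b" "b \<le> a"
  shows "\<exists>w \<in> (Pmfd s1 s2 g b :: ('a \<Rightarrow> real) set). Ifun s1 s2 g w * transfer_factor (b / a) \<le> Ifun s1 s2 g u"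
proof -
  define \<mu> where "\<mu> = sqrt (b / a)"
  have "0 < \<mu>" "\<mu> \<le> 1" "\<mu>\<^sup>2 * a = b" using assms by (simp_all add: \<mu>_def)
  then obtain t where "0 < t" and w: "fibre \<mu> t u \<in> Pmfd s1 s2 g b"
    using exists_fibre_in_Pmfd[OF u _ \<open>0 < \<mu>\<close>] assms by auto
  define w where "w = fibre \<mu> t u"
  define v where "v = fibre 1 t u"
  define E where "E = 1 - \<mu> powr (\<beta> - 2)"
  have "0 \<le> E" "\<mu> powr \<beta> \<le> 1"
    using \<open>0 < \<mu>\<close> \<open>\<mu> \<le> 1\<close> two_less_alpha alpha_less_beta by (simp_all add: E_def powr_le1)
  have "v \<in> borel_measurable lborel"
    unfolding v_def by (rule borel_measurable_fibre[OF PmfdD(2)[OF u]])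
  from Ifun_cmult_le_le_1[OF this \<open>0 < \<mu>\<close> \<open>\<mu> \<le> 1\<close>]
  have "Ifun s1 s2 g w \<le> \<mu> powr \<beta> * Ifun s1 s2 g v + E * kinetic s1 s2 w / 2"
    unfolding w_def v_def E_def fibre_eq_cmult[of \<mu>] .
  also have "\<mu> powr \<beta> * Ifun s1 s2 g v \<le> Ifun s1 s2 g u"
    using Ifun_fibre_le[OF u \<open>0 < t\<close>] Ifun_nonneg_on_Pmfd[OF u] \<open>\<mu> powr \<beta> \<le> 1\<close>
    by (simp add: v_def) (smt (verit) mult_left_le_one_le mult_left_mono powr_ge_zero)
  also have "E * kinetic s1 s2 w \<le> E * (Ifun s1 s2 g w / coercivity_const)"
    using Ifun_ge_on_Pmfd[OF w[folded w_def]] coercivity_const_pos \<open>0 \<le> E\<close>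
    by (intro mult_left_mono) (simp_all add: field_simps)
  finally have "Ifun s1 s2 g w * (1 - E / (2 * coercivity_const)) \<le> Ifun s1 s2 g u"
    using coercivity_const_pos by (simp add: field_simps)
  moreover have "E = 1 - (b / a) powr ((\<beta> - 2) / 2)"
    using assms by (simp add: E_def \<mu>_def powr_half_sqrt[symmetric] powr_powr)
  ultimately show ?thesis
    using w unfolding w_def transfer_factor_def by auto
qed

lemma m_level_le_Ifun:
  fixes u :: "'a \<Rightarrow> real"
  assumes "u \<in> Pmfd s1 s2 g b"
  shows "m_level TYPE('a) s1 s2 g b \<le> Ifun s1 s2 g u"
  unfolding m_level_def using assms Ifun_nonneg_on_Pmfd
  by (intro cInf_lower bdd_belowI[of _ 0]) auto

lemma m_level_ge:
  assumes "(Pmfd s1 s2 g a :: ('a \<Rightarrow> real) set) \<noteq> {}"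
    and "\<And>u :: 'a \<Rightarrow> real. u \<in> Pmfd s1 s2 g a \<Longrightarrow> x \<le> Ifun s1 s2 g u"
  shows "x \<le> m_level TYPE('a) s1 s2 g a"
  unfolding m_level_def using assms by (intro cInf_greatest) auto

lemma m_level_nonneg:
  "(Pmfd s1 s2 g a :: ('a \<Rightarrow> real) set) \<noteq> {} \<Longrightarrow> 0 \<le> m_level TYPE('a) s1 s2 g a"
  using Ifun_nonneg_on_Pmfd by (intro m_level_ge) auto

lemma Pmfd_nonempty_transfer:
  assumes "(Pmfd s1 s2 g a :: ('a \<Rightarrow> real) set) \<noteq> {}" "0 < a" "0 < b"
  shows "(Pmfd s1 s2 g b :: ('a \<Rightarrow> real) set) \<noteq> {}"
proof -
  obtain u :: "'a \<Rightarrow> real" where u: "u \<in> Pmfd s1 s2 g a" using assms(1) by blast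
  show ?thesis
  proof (cases "a \<le> b")
    case True
    then show ?thesis using Pmfd_transfer_up[OF u \<open>0 < a\<close>] by blast
  next
    case False
    then show ?thesis using Pmfd_transfer_down[OF u \<open>0 < b\<close>] by fastforce
  qed
qed

lemma m_level_up:
  assumes "(Pmfd s1 s2 g a :: ('a \<Rightarrow> real) set) \<noteq> {}" "0 < a" "a \<le> b"
  shows "m_level TYPE('a) s1 s2 g b \<le> b / a * m_level TYPE('a) s1 s2 g a"
proof -
  have "a / b * m_level TYPE('a) s1 s2 g b \<le> m_level TYPE('a) s1 s2 g a"
  proof (rule m_level_ge[OF assms(1)])
    fix u :: "'a \<Rightarrow> real" assume "u \<in> Pmfd s1 s2 g a"
    then obtain w :: "'a \<Rightarrow> real" where "w \<in> Pmfd s1 s2 g b" "Ifun s1 s2 g w \<le> b / a * Ifun s1 s2 g u"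
      using Pmfd_transfer_up assms(2,3) by blast
    then have "m_level TYPE('a) s1 s2 g b \<le> b / a * Ifun s1 s2 g u"
      using m_level_le_Ifun by fastforce
    then show "a / b * m_level TYPE('a) s1 s2 g b \<le> Ifun s1 s2 g u"
      using assms(2,3) by (simp add: field_simps)
  qed
  then show ?thesis using assms(2,3) by (simp add: field_simps)
qed

lemma m_level_down:
  assumes "(Pmfd s1 s2 g a :: ('a \<Rightarrow> real) set) \<noteq> {}" "0 < b" "b \<le> a"
  shows "m_level TYPE('a) s1 s2 g b * transfer_factor (b / a) \<le> m_level TYPE('a) s1 s2 g a"
proof (cases "0 \<le> transfer_factor (b / a)")
  case True
  show ?thesis
  proof (rule m_level_ge[OF assms(1)])
    fix u :: "'a \<Rightarrow> real" assume "u \<in> Pmfd s1 s2 g a"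
    then obtain w :: "'a \<Rightarrow> real" where "w \<in> Pmfd s1 s2 g b"
      "Ifun s1 s2 g w * transfer_factor (b / a) \<le> Ifun s1 s2 g u"
      using Pmfd_transfer_down assms(2,3) by blast
    then show "m_level TYPE('a) s1 s2 g b * transfer_factor (b / a) \<le> Ifun s1 s2 g u"
      using m_level_le_Ifun True by (meson mult_right_mono order_trans)
  qed
next
  case False
  have "0 \<le> m_level TYPE('a) s1 s2 g b"
    using assms Pmfd_nonempty_transfer m_level_nonneg by simp
  then show ?thesis
    using False m_level_nonneg[OF assms(1)] by (smt (verit) mult_nonneg_nonpos)
qed

lemma continuous_on_m_level: "continuous_on {0<..} (m_level TYPE('a) s1 s2 g)"
proof (cases "\<forall>a>0. (Pmfd s1 s2 g a :: ('a \<Rightarrow> real) set) \<noteq> {}")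
  case True
  show ?thesis
  proof (rule continuous_on_pos_if_scaling_bounds[where \<phi>=transfer_factor])
    show "0 \<le> m_level TYPE('a) s1 s2 g a" if "0 < a" for a
      using m_level_nonneg True that by blast
    show "m_level TYPE('a) s1 s2 g b \<le> b / a * m_level TYPE('a) s1 s2 g a"
      if "0 < a" "a \<le> b" for a b
      using m_level_up True that by blast
    show "m_level TYPE('a) s1 s2 g b * transfer_factor (b / a) \<le> m_level TYPE('a) s1 s2 g a"
      if "0 < b" "b \<le> a" for a b
      using m_level_down True that by simp
    show "isCont transfer_factor 1"
      unfolding transfer_factor_def using coercivity_const_pos by (intro continuous_intros) auto
    show "transfer_factor 1 = 1"
      by (simp add: transfer_factor_def)
  qed
next
  case False
  \<comment> \<open>then every \<open>P\<^sub>a\<close> is empty and \<open>m\<close> is the unspecified constant \<open>Inf {}\<close>\<close>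
  then have "(Pmfd s1 s2 g a :: ('a \<Rightarrow> real) set) = {}" if "0 < a" for a
    using Pmfd_nonempty_transfer that by blast
  then have "m_level TYPE('a) s1 s2 g a = Inf {}" if "0 < a" for a
    using that by (simp add: m_level_def)
  then show ?thesis
    by (intro continuous_on_eq[OF continuous_on_const]) simp
qed

end

theorem lemma3p3:
  fixes s1 s2 \<alpha> \<beta> :: real and g :: "real \<Rightarrow> real"
  defines "d \<equiv> real DIM('a::euclidean_space)"
  assumes "0 < s1" "s1 < s2" "s2 < 1"
    and "2 * s1 < d" "d < 2 * s1 * s2 / (s2 - s1)"
    and G1: "continuous_on UNIV g" "\<And>s. g (- s) = - g s"
    and G2: "2 + 4 * s2 / d < \<alpha>" "\<alpha> < \<beta>" "\<beta> < 2 * d / (d - 2 * s1)"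
      "\<And>s. \<alpha> * Gprim g s \<le> g s * s" "\<And>s. g s * s \<le> \<beta> * Gprim g s"
    and G3: "\<And>s. Gtil g differentiable (at s)"
      "\<And>s. deriv (Gtil g) s * s \<ge> \<alpha> * Gtil g s"
  shows "continuous_on {0<..} (m_level TYPE('a) s1 s2 g)"
proof -
  have "0 < 4 * s2 / d" using \<open>0 < s1\<close> \<open>s1 < s2\<close> by (simp add: d_def)
  then have "2 < \<alpha>" using G2(1) by linarith
  interpret pohozaev_setting g \<alpha> \<beta> "TYPE('a)" s1 s2
    by unfold_locales (use assms \<open>2 < \<alpha>\<close> in \<open>auto simp: d_def\<close>)
  show ?thesis by (rule continuous_on_m_level)
qed

end
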